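(* For $j\in\{1,\dots,k\}$ let $F_j\colon\mathbb B^{\alpha^j}\to\mathbb C$ ($j\le k+1$) be functors and $\phi_j\colon F_j\to F_{j+1}$ transformations of type $|\alpha^j|\xrightarrow{\sigma_j}n_j\xleftarrow{\tau_j}|\alpha^{j+1}|$. Suppose the type $|\alpha^1|\to l\leftarrow|\alpha^{k+1}|$ of $\phi_k\circ\cdots\circ\phi_1$ is computed by iterated pushouts in finite sets, and let $\xi_j\colon n_j\to l$ be the induced map from $n_j$ to $l$. Let $i\in l$. If the $i$-th connected component of the composite graph $\Gamma(\phi_k)\circ\cdots\circ\Gamma(\phi_1)$ is acyclic and, for all $j\in\{1,\dots,k\}$ and all $x\in\xi_j^{-1}\{i\}$, the transformation $\phi_j$ is dinatural in its $x$-th variable, then $\phi_k\circ\cdots\circ\phi_1$ is dinatural in its $i$-th variable.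
   Context: Notation: for $k\in\mathbb N$, $k$ also denotes $\{1,\dots,k\}$. For $\alpha\in\{+,-\}^*$, $\mathbb B^\alpha=\mathbb B^{\alpha_1}\times\cdots\times\mathbb B^{\alpha_{|\alpha|}}$ with $\mathbb B^+=\mathbb B$, $\mathbb B^-=\mathbb B^{op}$. For $\mathbf A=(A_1,\dots,A_n)$ and $\sigma\colon k\to n$, $\mathbf A\sigma=(A_{\sigma1},\dots,A_{\sigma k})$. A morphism $f\colon A\to B$ placed in a contravariant argument is regarded as a morphism $B\to A$ of $\mathbb B^{op}$. A transformation $\phi\colon F\to G$ of type $|\alpha|\xrightarrow{\sigma}n\xleftarrow{\tau}|\beta|$ ($\sigma,\tau$ arbitrary functions) is a family $\phi_{\mathbf A}\colon F(\mathbf A\sigma)\to G(\mathbf A\tau)$, $\mathbf A\in\mathrm{Ob}(\mathbb B)^n$; $A_i$ is its $i$-th variable. $\mathbf A[X,Y/i]\sigma$ is the tuple whose $j$-th entry is $X$ if $\sigma j=i,\alpha_j=-$, $Y$ if $\sigma j=i,\alpha_j=+$, and $A_{\sigma j}$ (or $1_{A_{\sigma j}}$ when $X,Y$ are morphisms) otherwise; $\mathbf A[X/i]=\mathbf A[X,X/i]$. $\phi$ is dinatural in its $i$-th variable if for all objects $A_j$ ($j\neq i$) and all $f\colon A\to B$: $G(\mathbf A[A,f/i]\tau)\circ\phi_{\mathbf A[A/i]}\circ F(\mathbf A[f,A/i]\sigma)=G(\mathbf A[f,B/i]\tau)\circ\phi_{\mathbf A[B/i]}\circ F(\mathbf A[B,f/i]\sigma)$.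 Vertical composition of $\phi$ with $\psi\colon G\to H$ of type $|\beta|\xrightarrow{\eta}m\xleftarrow{\theta}|\gamma|$: with $\zeta\colon n\to l$, $\xi\colon m\to l$ a pushout of $\tau,\eta$, $\psi\circ\phi$ has type $(\zeta\sigma,\xi\theta)$ and components $\psi_{\mathbf A\xi}\circ\phi_{\mathbf A\zeta}$. Iterating gives $\phi_k\circ\cdots\circ\phi_1$, whose type is given by pasting pushouts; $\xi_j$ is the composite of the pushout maps from $n_j$ to the final set $l$. Composite graph $\Gamma(\phi_k)\circ\cdots\circ\Gamma(\phi_1)$: directed bipartite graph whose places are the disjoint union of $|\alpha^1|,\dots,|\alpha^{k+1}|$ and whose transitions are $n_1\sqcup\cdots\sqcup n_k$; for $t\in n_j$: arc from place $p$ of block $\alpha^j$ to $t$ iff $\sigma_j p=t$ and $\alpha^j_p=+$, from $t$ to it iff $\sigma_j p=t$ and $\alpha^j_p=-$; arc from place $p$ of block $\alpha^{j+1}$ to $t$ iff $\tau_j p=t$ and $\alpha^{j+1}_p=-$, from $t$ to it iff $\tau_jp=t$ and $\alpha^{j+1}_p=+$. Its connected components correspond bijectively to $l$; the $i$-th one contains the transitions $t\in n_j$ with $\xi_j t=i$. Acyclic means without directed cycles. *)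

theory Defs
  imports Main
begin

record ('o, 'm) category =
  Ob  :: "'o set"
  Ar  :: "'m set"
  Dom :: "'m \<Rightarrow> 'o"
  Cod :: "'m \<Rightarrow> 'o"
  Id  :: "'o \<Rightarrow> 'm"
  Cmp :: "'m \<Rightarrow> 'm \<Rightarrow> 'm"   (* Cmp C g f = g \<circ> f *)

definition is_category :: "('o, 'm) category \<Rightarrow> bool" where
  "is_category C \<longleftrightarrow>
     (\<forall>f \<in> Ar C. Dom C f \<in> Ob C \<and> Cod C f \<in> Ob C) \<and>
     (\<forall>A \<in> Ob C. Id C A \<in> Ar C \<and> Dom C (Id C A) = A \<and> Cod C (Id C A) = A) \<and>
     (\<forall>f \<in> Ar C. \<forall>g \<in> Ar C. Cod C f = Dom C g \<longrightarrow>
        Cmp C g f \<in> Ar C \<and> Dom C (Cmp C g f) = Dom C f \<and> Cod C (Cmp C g f) = Cod C g) \<and>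
     (\<forall>f \<in> Ar C. Cmp C f (Id C (Dom C f)) = f \<and> Cmp C (Id C (Cod C f)) f = f) \<and>
     (\<forall>f \<in> Ar C. \<forall>g \<in> Ar C. \<forall>h \<in> Ar C. Cod C f = Dom C g \<longrightarrow> Cod C g = Dom C h \<longrightarrow>
        Cmp C h (Cmp C g f) = Cmp C (Cmp C h g) f)"

text \<open>A word alpha is a list of variances; tuples of
objects/morphisms are lists of the same length. An arrow in a contravariant
position is a B-arrow regarded as an arrow of B^op.\<close>

datatype variance = Pos | Neg

definition srcs :: "('o, 'm) category \<Rightarrow> variance list \<Rightarrow> 'm list \<Rightarrow> 'o list" where
  "srcs B \<alpha> fs = map (\<lambda>p. if \<alpha> ! p = Pos then Dom B (fs ! p) else Cod B (fs ! p)) [0..<length \<alpha>]"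

definition tgts :: "('o, 'm) category \<Rightarrow> variance list \<Rightarrow> 'm list \<Rightarrow> 'o list" where
  "tgts B \<alpha> fs = map (\<lambda>p. if \<alpha> ! p = Pos then Cod B (fs ! p) else Dom B (fs ! p)) [0..<length \<alpha>]"

definition cmps :: "('o, 'm) category \<Rightarrow> variance list \<Rightarrow> 'm list \<Rightarrow> 'm list \<Rightarrow> 'm list" where
  "cmps B \<alpha> gs fs = map (\<lambda>p. if \<alpha> ! p = Pos then Cmp B (gs ! p) (fs ! p) else Cmp B (fs ! p) (gs ! p)) [0..<length \<alpha>]"

definition is_functor ::
  "('o, 'm) category \<Rightarrow> ('c, 'd) category \<Rightarrow> variance list \<Rightarrow>
   ('o list \<Rightarrow> 'c) \<Rightarrow> ('m list \<Rightarrow> 'd) \<Rightarrow> bool" where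
  "is_functor B C \<alpha> Fo Fm \<longleftrightarrow>
     (\<forall>As. length As = length \<alpha> \<and> set As \<subseteq> Ob B \<longrightarrow> Fo As \<in> Ob C) \<and>
     (\<forall>fs. length fs = length \<alpha> \<and> set fs \<subseteq> Ar B \<longrightarrow>
        Fm fs \<in> Ar C \<and> Dom C (Fm fs) = Fo (srcs B \<alpha> fs) \<and> Cod C (Fm fs) = Fo (tgts B \<alpha> fs)) \<and>
     (\<forall>As. length As = length \<alpha> \<and> set As \<subseteq> Ob B \<longrightarrow> Fm (map (Id B) As) = Id C (Fo As)) \<and>
     (\<forall>fs gs. length fs = length \<alpha> \<and> set fs \<subseteq> Ar B \<and> length gs = length \<alpha> \<and> set gs \<subseteq> Ar B
        \<and> tgts B \<alpha> fs = srcs B \<alpha> gs \<longrightarrow> Fm (cmps B \<alpha> gs fs) = Cmp C (Fm gs) (Fm fs))"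

text \<open>Variables and positions are 0-based: the set k is rendered as {0..<k}.
A tuple A \<in> Ob(B)^n is a list of length n; A\<sigma> is reindex \<sigma> m As.\<close>

definition reindex :: "(nat \<Rightarrow> nat) \<Rightarrow> nat \<Rightarrow> 'a list \<Rightarrow> 'a list" where
  "reindex \<sigma> m As = map (\<lambda>j. As ! \<sigma> j) [0..<m]"

definition maps_into :: "(nat \<Rightarrow> nat) \<Rightarrow> nat \<Rightarrow> nat \<Rightarrow> bool" where
  "maps_into f a b \<longleftrightarrow> (\<forall>x < a. f x < b)"

definition is_transformation ::
  "('o, 'm) category \<Rightarrow> ('c, 'd) category \<Rightarrow> variance list \<Rightarrow> variance list \<Rightarrow>
   ('o list \<Rightarrow> 'c) \<Rightarrow> ('o list \<Rightarrow> 'c) \<Rightarrow> nat \<Rightarrow> (nat \<Rightarrow> nat) \<Rightarrow> (nat \<Rightarrow> nat) \<Rightarrow>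
   ('o list \<Rightarrow> 'd) \<Rightarrow> bool" where
  "is_transformation B C \<alpha> \<beta> Fo Go n \<sigma> \<tau> \<phi> \<longleftrightarrow>
     maps_into \<sigma> (length \<alpha>) n \<and> maps_into \<tau> (length \<beta>) n \<and>
     (\<forall>As. length As = n \<and> set As \<subseteq> Ob B \<longrightarrow>
        \<phi> As \<in> Ar C \<and> Dom C (\<phi> As) = Fo (reindex \<sigma> (length \<alpha>) As)
                    \<and> Cod C (\<phi> As) = Go (reindex \<tau> (length \<beta>) As))"

definition subst_arr ::
  "('o, 'm) category \<Rightarrow> variance list \<Rightarrow> (nat \<Rightarrow> nat) \<Rightarrow> 'o list \<Rightarrow> nat \<Rightarrow> 'm \<Rightarrow> 'm \<Rightarrow> 'm list" where
  "subst_arr B \<alpha> \<sigma> As i X Y =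
     map (\<lambda>j. if \<sigma> j = i then (if \<alpha> ! j = Neg then X else Y) else Id B (As ! \<sigma> j)) [0..<length \<alpha>]"

definition dinatural_in ::
  "('o, 'm) category \<Rightarrow> ('c, 'd) category \<Rightarrow> variance list \<Rightarrow> variance list \<Rightarrow>
   ('m list \<Rightarrow> 'd) \<Rightarrow> ('m list \<Rightarrow> 'd) \<Rightarrow> nat \<Rightarrow> (nat \<Rightarrow> nat) \<Rightarrow> (nat \<Rightarrow> nat) \<Rightarrow>
   ('o list \<Rightarrow> 'd) \<Rightarrow> nat \<Rightarrow> bool" where
  "dinatural_in B C \<alpha> \<beta> Fm Gm n \<sigma> \<tau> \<phi> i \<longleftrightarrow>
     (\<forall>As f. length As = n \<and> set As \<subseteq> Ob B \<and> f \<in> Ar B \<longrightarrow>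
        (let A = Dom B f; B' = Cod B f in
          Cmp C (Cmp C (Gm (subst_arr B \<beta> \<tau> As i (Id B A) f)) (\<phi> (As[i := A])))
                (Fm (subst_arr B \<alpha> \<sigma> As i f (Id B A)))
        = Cmp C (Cmp C (Gm (subst_arr B \<beta> \<tau> As i f (Id B B'))) (\<phi> (As[i := B'])))
                (Fm (subst_arr B \<alpha> \<sigma> As i (Id B B') f))))"

text \<open>The finite set a is {0..<a}; maps are functions nat \<Rightarrow> nat mapping into the target.\<close>
definition is_pushout ::
  "nat \<Rightarrow> nat \<Rightarrow> nat \<Rightarrow> (nat \<Rightarrow> nat) \<Rightarrow> (nat \<Rightarrow> nat) \<Rightarrow> nat \<Rightarrow> (nat \<Rightarrow> nat) \<Rightarrow> (nat \<Rightarrow> nat) \<Rightarrow> bool" where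
  "is_pushout a b c f g d h k \<longleftrightarrow>
     maps_into f a b \<and> maps_into g a c \<and> maps_into h b d \<and> maps_into k c d \<and>
     (\<forall>x < a. h (f x) = k (g x)) \<and>
     (\<forall>e u v. maps_into u b e \<and> maps_into v c e \<and> (\<forall>x < a. u (f x) = v (g x)) \<longrightarrow>
        (\<exists>w. maps_into w d e \<and> (\<forall>y < b. w (h y) = u y) \<and> (\<forall>z < c. w (k z) = v z)) \<and>
        (\<forall>w w'. (\<forall>y < b. w (h y) = u y) \<and> (\<forall>z < c. w (k z) = v z) \<and>
                (\<forall>y < b. w' (h y) = u y) \<and> (\<forall>z < c. w' (k z) = v z) \<longrightarrow> (\<forall>x < d. w x = w' x)))"

text \<open>Iterated pushouts computing the type of phi_{k-1} o ... o phi_0 (0-based).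
m j is the set of variables of phi_j o ... o phi_0, with m 0 = n 0.
For 1 \<le> j < k: the square with legs rleg (j-1): |alpha j| \<rightarrow> m (j-1) (right leg of the
composite so far) and sigma j: |alpha j| \<rightarrow> n j is a pushout with injections
zeta j : m (j-1) \<rightarrow> m j and xip j : n j \<rightarrow> m j.\<close>
definition rleg :: "(nat \<Rightarrow> nat \<Rightarrow> nat) \<Rightarrow> (nat \<Rightarrow> nat \<Rightarrow> nat) \<Rightarrow> nat \<Rightarrow> nat \<Rightarrow> nat" where
  "rleg \<tau> xip j = (if j = 0 then \<tau> 0 else xip j \<circ> \<tau> j)"

definition iterated_pushouts ::
  "nat \<Rightarrow> (nat \<Rightarrow> variance list) \<Rightarrow> (nat \<Rightarrow> nat) \<Rightarrow> (nat \<Rightarrow> nat \<Rightarrow> nat) \<Rightarrow> (nat \<Rightarrow> nat \<Rightarrow> nat) \<Rightarrow>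
   (nat \<Rightarrow> nat) \<Rightarrow> (nat \<Rightarrow> nat \<Rightarrow> nat) \<Rightarrow> (nat \<Rightarrow> nat \<Rightarrow> nat) \<Rightarrow> bool" where
  "iterated_pushouts k \<alpha> n \<sigma> \<tau> m zeta xip \<longleftrightarrow>
     m 0 = n 0 \<and>
     (\<forall>j. 1 \<le> j \<and> j < k \<longrightarrow>
        is_pushout (length (\<alpha> j)) (m (j - 1)) (n j) (rleg \<tau> xip (j - 1)) (\<sigma> j) (m j) (zeta j) (xip j))"

primrec zchain :: "(nat \<Rightarrow> nat \<Rightarrow> nat) \<Rightarrow> nat \<Rightarrow> nat \<Rightarrow> nat \<Rightarrow> nat" where
  "zchain zeta j 0 x = x"
| "zchain zeta j (Suc K) x = (if Suc K \<le> j then x else zeta (Suc K) (zchain zeta j K x))"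

definition induced_xi :: "nat \<Rightarrow> (nat \<Rightarrow> nat \<Rightarrow> nat) \<Rightarrow> (nat \<Rightarrow> nat \<Rightarrow> nat) \<Rightarrow> nat \<Rightarrow> nat \<Rightarrow> nat" where
  "induced_xi k zeta xip j = zchain zeta j (k - 1) \<circ> (if j = 0 then id else xip j)"

primrec comp_components ::
  "('c, 'd) category \<Rightarrow> (nat \<Rightarrow> 'o list \<Rightarrow> 'd) \<Rightarrow> (nat \<Rightarrow> nat) \<Rightarrow> (nat \<Rightarrow> nat \<Rightarrow> nat) \<Rightarrow>
   nat \<Rightarrow> 'o list \<Rightarrow> 'd" where
  "comp_components C \<phi> n xi 0 As = \<phi> 0 (reindex (xi 0) (n 0) As)"
| "comp_components C \<phi> n xi (Suc j) As =
     Cmp C (\<phi> (Suc j) (reindex (xi (Suc j)) (n (Suc j)) As)) (comp_components C \<phi> n xi j As)"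

datatype node = Place nat nat | Trans nat nat

text \<open>Places: Place j p, block j \<le> k (0-based: block j is |alpha j|), p < length (alpha j).
Transitions: Trans j t, j < k, t < n j.\<close>
definition cgraph_arcs ::
  "nat \<Rightarrow> (nat \<Rightarrow> variance list) \<Rightarrow> (nat \<Rightarrow> nat) \<Rightarrow> (nat \<Rightarrow> nat \<Rightarrow> nat) \<Rightarrow> (nat \<Rightarrow> nat \<Rightarrow> nat) \<Rightarrow>
   (node \<times> node) set" where
  "cgraph_arcs k \<alpha> n \<sigma> \<tau> =
     {(Place j p, Trans j t) | j p t. j < k \<and> t < n j \<and> p < length (\<alpha> j) \<and> \<sigma> j p = t \<and> \<alpha> j ! p = Pos}
   \<union> {(Trans j t, Place j p) | j p t. j < k \<and> t < n j \<and> p < length (\<alpha> j) \<and> \<sigma> j p = t \<and> \<alpha> j ! p = Neg}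
   \<union> {(Place (Suc j) p, Trans j t) | j p t. j < k \<and> t < n j \<and> p < length (\<alpha> (Suc j)) \<and> \<tau> j p = t \<and> \<alpha> (Suc j) ! p = Neg}
   \<union> {(Trans j t, Place (Suc j) p) | j p t. j < k \<and> t < n j \<and> p < length (\<alpha> (Suc j)) \<and> \<tau> j p = t \<and> \<alpha> (Suc j) ! p = Pos}"

definition component ::
  "(node \<times> node) set \<Rightarrow> nat \<Rightarrow> (nat \<Rightarrow> nat) \<Rightarrow> (nat \<Rightarrow> nat \<Rightarrow> nat) \<Rightarrow> nat \<Rightarrow> node set" where
  "component E k n xi i =
     {v. \<exists>j t. j < k \<and> t < n j \<and> xi j t = i \<and> (Trans j t, v) \<in> (E \<union> E\<inverse>)\<^sup>*}"

definition acyclic_on :: "(node \<times> node) set \<Rightarrow> node set \<Rightarrow> bool" where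
  "acyclic_on E V \<longleftrightarrow> acyclic (E \<inter> (V \<times> V))"

end

theory Submission
  imports Defs
begin

text \<open>Fix an object tuple As and a morphism f : A \<rightarrow> B. For a set S of transitions of the i-th
  connected component, evaluate the transitions in S at B and the others at A; the places of the
  component then carry f or identities, and whiskering \<phi>_k \<circ> \<dots> \<circ> \<phi>_1 with the functors
  F_j applied to these tuples gives a morphism N_S. It is well typed when S is closed along the
  arcs of the component. Since the component is acyclic, a closed nonempty S has a transition t
  without predecessor in S, so S - {t} is closed again, and dinaturality of t in its variable
  shows N_S = N_{S - {t}}. Hence N_S is the same for all transitions and for none of them, and
  these two morphisms are the two sides of the dinaturality equation in the variable i: for them
  the interior functors are applied to identities.\<close>

lemma variance_neq_Pos_iff [simp]: "(v \<noteq> Pos) = (v = Neg)"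
  by (cases v) auto

lemma variance_neq_Neg_iff [simp]: "(v \<noteq> Neg) = (v = Pos)"
  by (cases v) auto

lemma cat_dom_cod: "is_category C \<Longrightarrow> f \<in> Ar C \<Longrightarrow> Dom C f \<in> Ob C \<and> Cod C f \<in> Ob C"
  by (simp add: is_category_def)

lemma cat_id:
  "is_category C \<Longrightarrow> A \<in> Ob C \<Longrightarrow> Id C A \<in> Ar C \<and> Dom C (Id C A) = A \<and> Cod C (Id C A) = A"
  by (simp add: is_category_def)

lemma cat_comp:
  "is_category C \<Longrightarrow> f \<in> Ar C \<Longrightarrow> g \<in> Ar C \<Longrightarrow> Cod C f = Dom C g \<Longrightarrow>
   Cmp C g f \<in> Ar C \<and> Dom C (Cmp C g f) = Dom C f \<and> Cod C (Cmp C g f) = Cod C g"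
  by (simp add: is_category_def)

lemma cat_id_left: "is_category C \<Longrightarrow> f \<in> Ar C \<Longrightarrow> Cod C f = B \<Longrightarrow> Cmp C (Id C B) f = f"
  by (auto simp add: is_category_def)

lemma cat_id_right: "is_category C \<Longrightarrow> f \<in> Ar C \<Longrightarrow> Dom C f = A \<Longrightarrow> Cmp C f (Id C A) = f"
  by (auto simp add: is_category_def)

lemma cat_assoc:
  "is_category C \<Longrightarrow> f \<in> Ar C \<Longrightarrow> g \<in> Ar C \<Longrightarrow> h \<in> Ar C \<Longrightarrow>
   Cod C f = Dom C g \<Longrightarrow> Cod C g = Dom C h \<Longrightarrow> Cmp C h (Cmp C g f) = Cmp C (Cmp C h g) f"
  unfolding is_category_def by blast

lemma cat_reassoc_6:
  assumes C: "is_category C"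
    and ar: "P \<in> Ar C" "Q \<in> Ar C" "R \<in> Ar C" "S \<in> Ar C" "U \<in> Ar C" "r \<in> Ar C"
    and match: "Cod C r = Dom C U" "Cod C U = Dom C S" "Cod C S = Dom C R" "Cod C R = Dom C Q"
      "Cod C Q = Dom C P"
  shows "Cmp C (Cmp C P Q) (Cmp C R (Cmp C (Cmp C S U) r))
       = Cmp C P (Cmp C (Cmp C (Cmp C Q R) S) (Cmp C U r))"
proof -
  have Ur: "Cmp C U r \<in> Ar C" "Cod C (Cmp C U r) = Cod C U"
    using cat_comp[OF C] ar match by metis+
  have RS: "Cmp C R S \<in> Ar C" "Dom C (Cmp C R S) = Dom C S" "Cod C (Cmp C R S) = Cod C R"
    using cat_comp[OF C] ar match by metis+
  have RSUr: "Cmp C (Cmp C R S) (Cmp C U r) \<in> Ar C"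
    "Cod C (Cmp C (Cmp C R S) (Cmp C U r)) = Cod C R"
    using cat_comp[OF C, of "Cmp C U r" "Cmp C R S"] RS Ur match by auto
  have "Cmp C (Cmp C P Q) (Cmp C R (Cmp C (Cmp C S U) r))
      = Cmp C (Cmp C P Q) (Cmp C (Cmp C R S) (Cmp C U r))"
    using cat_assoc[OF C] ar match Ur by metis
  also have "\<dots> = Cmp C P (Cmp C Q (Cmp C (Cmp C R S) (Cmp C U r)))"
    using cat_assoc[OF C] ar match RSUr by metis
  also have "\<dots> = Cmp C P (Cmp C (Cmp C Q (Cmp C R S)) (Cmp C U r))"
    using cat_assoc[OF C] ar match RS Ur by metis
  also have "Cmp C Q (Cmp C R S) = Cmp C (Cmp C Q R) S"
    using cat_assoc[OF C] ar match by metis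
  finally show ?thesis .
qed

lemma functor_arr:
  "is_functor B C \<alpha> Fo Fm \<Longrightarrow> length fs = length \<alpha> \<Longrightarrow> set fs \<subseteq> Ar B \<Longrightarrow>
   Fm fs \<in> Ar C \<and> Dom C (Fm fs) = Fo (srcs B \<alpha> fs) \<and> Cod C (Fm fs) = Fo (tgts B \<alpha> fs)"
  unfolding is_functor_def by blast

lemma functor_id:
  "is_functor B C \<alpha> Fo Fm \<Longrightarrow> length As = length \<alpha> \<Longrightarrow> set As \<subseteq> Ob B \<Longrightarrow>
   Fm (map (Id B) As) = Id C (Fo As)"
  unfolding is_functor_def by blast

lemma functor_cmps:
  "is_functor B C \<alpha> Fo Fm \<Longrightarrow> length fs = length \<alpha> \<Longrightarrow> set fs \<subseteq> Ar B \<Longrightarrow>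
   length gs = length \<alpha> \<Longrightarrow> set gs \<subseteq> Ar B \<Longrightarrow> tgts B \<alpha> fs = srcs B \<alpha> gs \<Longrightarrow>
   Fm (cmps B \<alpha> gs fs) = Cmp C (Fm gs) (Fm fs)"
  unfolding is_functor_def by blast

lemma transformation_component:
  "is_transformation B C \<alpha> \<beta> Fo Go n \<sigma> \<tau> \<phi> \<Longrightarrow> length As = n \<Longrightarrow> set As \<subseteq> Ob B \<Longrightarrow>
   \<phi> As \<in> Ar C \<and> Dom C (\<phi> As) = Fo (reindex \<sigma> (length \<alpha>) As)
             \<and> Cod C (\<phi> As) = Go (reindex \<tau> (length \<beta>) As)"
  unfolding is_transformation_def by blast

lemma transformation_maps_into:
  "is_transformation B C \<alpha> \<beta> Fo Go n \<sigma> \<tau> \<phi> \<Longrightarrow> p < length \<alpha> \<Longrightarrow> \<sigma> p < n"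
  "is_transformation B C \<alpha> \<beta> Fo Go n \<sigma> \<tau> \<phi> \<Longrightarrow> p < length \<beta> \<Longrightarrow> \<tau> p < n"
  by (auto simp: is_transformation_def maps_into_def)

lemma length_srcs [simp]: "length (srcs B \<alpha> fs) = length \<alpha>"
  by (simp add: srcs_def)

lemma length_tgts [simp]: "length (tgts B \<alpha> fs) = length \<alpha>"
  by (simp add: tgts_def)

lemma length_cmps [simp]: "length (cmps B \<alpha> gs fs) = length \<alpha>"
  by (simp add: cmps_def)

lemma length_subst_arr [simp]: "length (subst_arr B \<alpha> \<sigma> As i X Y) = length \<alpha>"
  by (simp add: subst_arr_def)

lemma length_reindex [simp]: "length (reindex \<sigma> m As) = m"
  by (simp add: reindex_def)

lemma nth_srcs [simp]:
  "p < length \<alpha> \<Longrightarrow> srcs B \<alpha> fs ! p = (if \<alpha> ! p = Pos then Dom B (fs ! p) else Cod B (fs ! p))"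
  by (simp add: srcs_def)

lemma nth_tgts [simp]:
  "p < length \<alpha> \<Longrightarrow> tgts B \<alpha> fs ! p = (if \<alpha> ! p = Pos then Cod B (fs ! p) else Dom B (fs ! p))"
  by (simp add: tgts_def)

lemma nth_cmps [simp]:
  "p < length \<alpha> \<Longrightarrow>
   cmps B \<alpha> gs fs ! p = (if \<alpha> ! p = Pos then Cmp B (gs ! p) (fs ! p) else Cmp B (fs ! p) (gs ! p))"
  by (simp add: cmps_def)

lemma nth_subst_arr [simp]:
  "p < length \<alpha> \<Longrightarrow> subst_arr B \<alpha> \<sigma> As i X Y ! p =
     (if \<sigma> p = i then (if \<alpha> ! p = Neg then X else Y) else Id B (As ! \<sigma> p))"
  by (simp add: subst_arr_def)

lemma nth_reindex [simp]: "p < m \<Longrightarrow> reindex \<sigma> m As ! p = As ! \<sigma> p"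
  by (simp add: reindex_def)

lemma subst_arr_list_update [simp]: "subst_arr B \<alpha> \<sigma> (As[i := A]) i X Y = subst_arr B \<alpha> \<sigma> As i X Y"
  by (simp add: subst_arr_def)

lemma set_subset_nth: "set xs \<subseteq> S \<Longrightarrow> p < length xs \<Longrightarrow> xs ! p \<in> S"
  by (meson nth_mem subsetD)

lemma set_subst_arr:
  assumes "is_category B" "X \<in> Ar B" "Y \<in> Ar B" "set As \<subseteq> Ob B"
    and "\<And>p. p < length \<alpha> \<Longrightarrow> \<sigma> p < length As"
  shows "set (subst_arr B \<alpha> \<sigma> As i X Y) \<subseteq> Ar B"
  using assms cat_id set_subset_nth by (fastforce simp: subst_arr_def)

lemma tgts_subst_arr:
  assumes "is_category B" "set X \<subseteq> Ob B" "\<And>p. p < length \<alpha> \<Longrightarrow> \<sigma> p < length X"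
    and "Dom B u = X ! x" "Cod B v = X ! x"
  shows "tgts B \<alpha> (subst_arr B \<alpha> \<sigma> X x u v) = reindex \<sigma> (length \<alpha>) X"
proof (rule nth_equalityI)
  fix p assume "p < length (tgts B \<alpha> (subst_arr B \<alpha> \<sigma> X x u v))"
  then have p: "p < length \<alpha>" by simp
  have "X ! \<sigma> p \<in> Ob B" using assms(2) assms(3)[OF p] by (rule set_subset_nth)
  then show "tgts B \<alpha> (subst_arr B \<alpha> \<sigma> X x u v) ! p = reindex \<sigma> (length \<alpha>) X ! p"
    using p assms(4,5) cat_id[OF assms(1)] by auto
qed simp

lemma srcs_subst_arr:
  assumes "is_category B" "set X \<subseteq> Ob B" "\<And>p. p < length \<alpha> \<Longrightarrow> \<sigma> p < length X"
    and "Cod B u = X ! x" "Dom B v = X ! x"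
  shows "srcs B \<alpha> (subst_arr B \<alpha> \<sigma> X x u v) = reindex \<sigma> (length \<alpha>) X"
proof (rule nth_equalityI)
  fix p assume "p < length (srcs B \<alpha> (subst_arr B \<alpha> \<sigma> X x u v))"
  then have p: "p < length \<alpha>" by simp
  have "X ! \<sigma> p \<in> Ob B" using assms(2) assms(3)[OF p] by (rule set_subset_nth)
  then show "srcs B \<alpha> (subst_arr B \<alpha> \<sigma> X x u v) ! p = reindex \<sigma> (length \<alpha>) X ! p"
    using p assms(4,5) cat_id[OF assms(1)] by auto
qed simp

lemma cmps_unit_factorization:
  assumes B: "is_category B"
    and len: "length g = length \<alpha>" "length s = length \<alpha>" "length h = length \<alpha>"
    and ar: "\<And>p. p < length \<alpha> \<Longrightarrow> g ! p \<in> Ar B"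
    and first: "\<And>p. p < length \<alpha> \<Longrightarrow> P p \<Longrightarrow> h ! p = g ! p \<and> s ! p = Id B (tgts B \<alpha> g ! p)"
    and second: "\<And>p. p < length \<alpha> \<Longrightarrow> \<not> P p \<Longrightarrow> s ! p = g ! p \<and> h ! p = Id B (srcs B \<alpha> g ! p)"
  shows "cmps B \<alpha> s h = g"
proof (rule nth_equalityI)
  fix p assume "p < length (cmps B \<alpha> s h)"
  then have p: "p < length \<alpha>" by simp
  then show "cmps B \<alpha> s h ! p = g ! p"
    using first[OF p] second[OF p] ar[OF p] cat_id_left[OF B] cat_id_right[OF B]
    by (cases "P p"; cases "\<alpha> ! p") auto
qed (use len in simp)

section \<open>Dinaturality in one variable, in context\<close>

lemma dinatural_in_whiskered:
  fixes B :: "('o, 'm) category" and C :: "('c, 'd) category"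
    and \<alpha> \<beta> :: "variance list" and \<sigma> \<tau> :: "nat \<Rightarrow> nat"
    and X :: "'o list" and x :: nat and f :: 'm
  defines "s0 \<equiv> subst_arr B \<alpha> \<sigma> X x f (Id B (Dom B f))"
    and "s0' \<equiv> subst_arr B \<alpha> \<sigma> X x (Id B (Cod B f)) f"
    and "s1 \<equiv> subst_arr B \<beta> \<tau> X x (Id B (Dom B f)) f"
    and "s1' \<equiv> subst_arr B \<beta> \<tau> X x f (Id B (Cod B f))"
  assumes catB: "is_category B" and catC: "is_category C"
    and F: "is_functor B C \<alpha> Fo Fm" and G: "is_functor B C \<beta> Go Gm"
    and T: "is_transformation B C \<alpha> \<beta> Fo Go n \<sigma> \<tau> \<phi>"
    and D: "dinatural_in B C \<alpha> \<beta> Fm Gm n \<sigma> \<tau> \<phi> x"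
    and f: "f \<in> Ar B" and X: "length X = n" "set X \<subseteq> Ob B" "X ! x = Dom B f" and x: "x < n"
    and h0: "length h0 = length \<alpha>" "set h0 \<subseteq> Ar B"
      "tgts B \<alpha> h0 = srcs B \<alpha> s0" "tgts B \<alpha> h0 = srcs B \<alpha> s0'"
    and h1: "length h1 = length \<beta>" "set h1 \<subseteq> Ar B"
      "srcs B \<beta> h1 = tgts B \<beta> s1" "srcs B \<beta> h1 = tgts B \<beta> s1'"
    and r: "r \<in> Ar C" "Cod C r = Fo (srcs B \<alpha> h0)"
  shows "Cmp C (Gm (cmps B \<beta> h1 s1)) (Cmp C (\<phi> X) (Cmp C (Fm (cmps B \<alpha> s0 h0)) r))
       = Cmp C (Gm (cmps B \<beta> h1 s1')) (Cmp C (\<phi> (X[x := Cod B f])) (Cmp C (Fm (cmps B \<alpha> s0' h0)) r))"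
proof -
  define X' where "X' = X[x := Cod B f]"
  have ends: "Dom B f \<in> Ob B" "Cod B f \<in> Ob B" using cat_dom_cod[OF catB f] by auto
  note ids = cat_id[OF catB ends(1)] cat_id[OF catB ends(2)]
  have X': "length X' = n" "set X' \<subseteq> Ob B" "X' ! x = Cod B f"
    using X x ends by (auto simp: X'_def set_update_subsetI)
  have \<sigma>: "\<And>p. p < length \<alpha> \<Longrightarrow> \<sigma> p < length X" and \<tau>: "\<And>p. p < length \<beta> \<Longrightarrow> \<tau> p < length X"
    using transformation_maps_into[OF T] X by auto
  have s_ar: "set s0 \<subseteq> Ar B" "set s0' \<subseteq> Ar B" "set s1 \<subseteq> Ar B" "set s1' \<subseteq> Ar B"
    unfolding s0_def s0'_def s1_def s1'_def
    using set_subst_arr[OF catB _ _ X(2)] \<sigma> \<tau> f ids by auto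
  have s_X': "s0' = subst_arr B \<alpha> \<sigma> X' x (Id B (Cod B f)) f" "s1' = subst_arr B \<beta> \<tau> X' x f (Id B (Cod B f))"
    by (simp_all add: s0'_def s1'_def X'_def)
  have ts0: "tgts B \<alpha> s0 = reindex \<sigma> (length \<alpha>) X"
    unfolding s0_def by (rule tgts_subst_arr[OF catB X(2) \<sigma>]) (use X ids in auto)
  have ts0': "tgts B \<alpha> s0' = reindex \<sigma> (length \<alpha>) X'"
    unfolding s_X' by (rule tgts_subst_arr[OF catB X'(2)]) (use \<sigma> X X' ids in auto)
  have ss1: "srcs B \<beta> s1 = reindex \<tau> (length \<beta>) X"
    unfolding s1_def by (rule srcs_subst_arr[OF catB X(2) \<tau>]) (use X ids in auto)
  have ss1': "srcs B \<beta> s1' = reindex \<tau> (length \<beta>) X'"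
    unfolding s_X' by (rule srcs_subst_arr[OF catB X'(2)]) (use \<tau> X X' ids in auto)
  note FA = functor_arr[OF F] and GA = functor_arr[OF G]
  have Fs0: "Fm s0 \<in> Ar C" "Dom C (Fm s0) = Fo (srcs B \<alpha> s0)" "Cod C (Fm s0) = Fo (tgts B \<alpha> s0)"
    using FA[of s0] s_ar by (auto simp: s0_def)
  have Fs0': "Fm s0' \<in> Ar C" "Dom C (Fm s0') = Fo (srcs B \<alpha> s0')" "Cod C (Fm s0') = Fo (tgts B \<alpha> s0')"
    using FA[of s0'] s_ar by (auto simp: s0'_def)
  have Fh0: "Fm h0 \<in> Ar C" "Dom C (Fm h0) = Fo (srcs B \<alpha> h0)" "Cod C (Fm h0) = Fo (tgts B \<alpha> h0)"
    using FA[of h0] h0 by auto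
  have Gs1: "Gm s1 \<in> Ar C" "Dom C (Gm s1) = Go (srcs B \<beta> s1)" "Cod C (Gm s1) = Go (tgts B \<beta> s1)"
    using GA[of s1] s_ar by (auto simp: s1_def)
  have Gs1': "Gm s1' \<in> Ar C" "Dom C (Gm s1') = Go (srcs B \<beta> s1')" "Cod C (Gm s1') = Go (tgts B \<beta> s1')"
    using GA[of s1'] s_ar by (auto simp: s1'_def)
  have Gh1: "Gm h1 \<in> Ar C" "Dom C (Gm h1) = Go (srcs B \<beta> h1)" "Cod C (Gm h1) = Go (tgts B \<beta> h1)"
    using GA[of h1] h1 by auto
  have TX: "\<phi> X \<in> Ar C" "Dom C (\<phi> X) = Fo (reindex \<sigma> (length \<alpha>) X)" "Cod C (\<phi> X) = Go (reindex \<tau> (length \<beta>) X)"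
    using transformation_component[OF T X(1,2)] by auto
  have TX': "\<phi> X' \<in> Ar C" "Dom C (\<phi> X') = Fo (reindex \<sigma> (length \<alpha>) X')"
    "Cod C (\<phi> X') = Go (reindex \<tau> (length \<beta>) X')"
    using transformation_component[OF T X'(1,2)] by auto
  have F_split: "Fm (cmps B \<alpha> s0 h0) = Cmp C (Fm s0) (Fm h0)" "Fm (cmps B \<alpha> s0' h0) = Cmp C (Fm s0') (Fm h0)"
    using functor_cmps[OF F, of h0] h0 s_ar by (auto simp: s0_def s0'_def)
  have G_split: "Gm (cmps B \<beta> h1 s1) = Cmp C (Gm h1) (Gm s1)" "Gm (cmps B \<beta> h1 s1') = Cmp C (Gm h1) (Gm s1')"
    using functor_cmps[OF G, of _ h1] h1 s_ar by (auto simp: s1_def s1'_def)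
  have dinat: "Cmp C (Cmp C (Gm s1) (\<phi> X)) (Fm s0) = Cmp C (Cmp C (Gm s1') (\<phi> X')) (Fm s0')"
    using D X f list_update_id[of X x] unfolding dinatural_in_def Let_def s0_def s0'_def s1_def s1'_def X'_def
    by metis
  have "Cmp C (Gm (cmps B \<beta> h1 s1)) (Cmp C (\<phi> X) (Cmp C (Fm (cmps B \<alpha> s0 h0)) r))
      = Cmp C (Gm h1) (Cmp C (Cmp C (Cmp C (Gm s1) (\<phi> X)) (Fm s0)) (Cmp C (Fm h0) r))"
    unfolding F_split G_split
    by (rule cat_reassoc_6[OF catC Gh1(1) Gs1(1) TX(1) Fs0(1) Fh0(1) r(1)])
       (use r Gh1 Gs1 TX Fs0 Fh0 h0 h1 ts0 ss1 in auto)
  also have "\<dots> = Cmp C (Gm h1) (Cmp C (Cmp C (Cmp C (Gm s1') (\<phi> X')) (Fm s0')) (Cmp C (Fm h0) r))"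
    by (simp only: dinat)
  also have "\<dots> = Cmp C (Gm (cmps B \<beta> h1 s1')) (Cmp C (\<phi> X') (Cmp C (Fm (cmps B \<alpha> s0' h0)) r))"
    unfolding F_split G_split
    by (rule cat_reassoc_6[OF catC Gh1(1) Gs1'(1) TX'(1) Fs0'(1) Fh0(1) r(1), symmetric])
       (use r Gh1 Gs1' TX' Fs0' Fh0 h0 h1 ts0' ss1' in auto)
  finally show ?thesis by (simp only: X'_def)
qed

text \<open>The tuples g0, g1 factor through the two sides of the dinaturality hexagon of \<phi> at x, the
  remaining factors being identities at the positions of x.\<close>

lemma dinatural_in_switch:
  fixes B :: "('o, 'm) category" and C :: "('c, 'd) category"
  assumes catB: "is_category B" and catC: "is_category C"
    and F: "is_functor B C \<alpha> Fo Fm" and G: "is_functor B C \<beta> Go Gm"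
    and T: "is_transformation B C \<alpha> \<beta> Fo Go n \<sigma> \<tau> \<phi>"
    and D: "dinatural_in B C \<alpha> \<beta> Fm Gm n \<sigma> \<tau> \<phi> x"
    and f: "f \<in> Ar B" and X: "length X = n" "set X \<subseteq> Ob B" "X ! x = Dom B f" and x: "x < n"
    and g0: "length g0 = length \<alpha>" "set g0 \<subseteq> Ar B" "length g0' = length \<alpha>"
    and g1: "length g1 = length \<beta>" "set g1 \<subseteq> Ar B" "length g1' = length \<beta>"
    and g0_at: "\<And>p. p < length \<alpha> \<Longrightarrow> \<sigma> p = x \<Longrightarrow>
       g0 ! p = (if \<alpha> ! p = Neg then f else Id B (Dom B f)) \<and>
       g0' ! p = (if \<alpha> ! p = Neg then Id B (Cod B f) else f)"
    and g0_off: "\<And>p. p < length \<alpha> \<Longrightarrow> \<sigma> p \<noteq> x \<Longrightarrow> g0' ! p = g0 ! p"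
    and g1_at: "\<And>p. p < length \<beta> \<Longrightarrow> \<tau> p = x \<Longrightarrow>
       g1 ! p = (if \<beta> ! p = Neg then Id B (Dom B f) else f) \<and>
       g1' ! p = (if \<beta> ! p = Neg then f else Id B (Cod B f))"
    and g1_off: "\<And>p. p < length \<beta> \<Longrightarrow> \<tau> p \<noteq> x \<Longrightarrow> g1' ! p = g1 ! p"
    and tgts_g0: "tgts B \<alpha> g0 = reindex \<sigma> (length \<alpha>) X"
    and srcs_g1: "srcs B \<beta> g1 = reindex \<tau> (length \<beta>) X"
    and r: "r \<in> Ar C" "Cod C r = Fo (srcs B \<alpha> g0)"
  shows "Cmp C (Gm g1) (Cmp C (\<phi> X) (Cmp C (Fm g0) r))
       = Cmp C (Gm g1') (Cmp C (\<phi> (X[x := Cod B f])) (Cmp C (Fm g0') r))"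
proof -
  have ends: "Dom B f \<in> Ob B" "Cod B f \<in> Ob B" using cat_dom_cod[OF catB f] by auto
  note ids = cat_id[OF catB ends(1)] cat_id[OF catB ends(2)]
  have \<sigma>: "\<And>p. p < length \<alpha> \<Longrightarrow> \<sigma> p < n" and \<tau>: "\<And>p. p < length \<beta> \<Longrightarrow> \<tau> p < n"
    using transformation_maps_into[OF T] by auto
  have idX: "\<And>q. q < n \<Longrightarrow> Id B (X ! q) \<in> Ar B \<and> Dom B (Id B (X ! q)) = X ! q \<and> Cod B (Id B (X ! q)) = X ! q"
    using cat_id[OF catB] set_subset_nth[OF X(2)] X(1) by metis
  have g_ar: "\<And>p. p < length \<alpha> \<Longrightarrow> g0 ! p \<in> Ar B" "\<And>p. p < length \<beta> \<Longrightarrow> g1 ! p \<in> Ar B"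
    using g0 g1 set_subset_nth by metis+
  have g'_ar: "\<And>p. p < length \<alpha> \<Longrightarrow> g0' ! p \<in> Ar B" "\<And>p. p < length \<beta> \<Longrightarrow> g1' ! p \<in> Ar B"
    using g_ar g0_at g0_off g1_at g1_off f ids by (metis (full_types))+
  have tgts_g0_nth: "\<And>p. p < length \<alpha> \<Longrightarrow> \<alpha> ! p = Pos \<Longrightarrow> Cod B (g0 ! p) = X ! \<sigma> p"
    "\<And>p. p < length \<alpha> \<Longrightarrow> \<alpha> ! p = Neg \<Longrightarrow> Dom B (g0 ! p) = X ! \<sigma> p"
    using tgts_g0 nth_tgts nth_reindex variance.distinct by metis+
  have srcs_g1_nth: "\<And>p. p < length \<beta> \<Longrightarrow> \<beta> ! p = Pos \<Longrightarrow> Dom B (g1 ! p) = X ! \<tau> p"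
    "\<And>p. p < length \<beta> \<Longrightarrow> \<beta> ! p = Neg \<Longrightarrow> Cod B (g1 ! p) = X ! \<tau> p"
    using srcs_g1 nth_srcs nth_reindex variance.distinct by metis+
  define s0 s0' s1 s1' where "s0 = subst_arr B \<alpha> \<sigma> X x f (Id B (Dom B f))"
    and "s0' = subst_arr B \<alpha> \<sigma> X x (Id B (Cod B f)) f"
    and "s1 = subst_arr B \<beta> \<tau> X x (Id B (Dom B f)) f"
    and "s1' = subst_arr B \<beta> \<tau> X x f (Id B (Cod B f))"
  define h0 where "h0 = map (\<lambda>p. if \<sigma> p = x then Id B (if \<alpha> ! p = Neg then Cod B f else Dom B f)
                               else g0 ! p) [0..<length \<alpha>]"
  define h1 where "h1 = map (\<lambda>p. if \<tau> p = x then Id B (if \<beta> ! p = Neg then Dom B f else Cod B f)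
                               else g1 ! p) [0..<length \<beta>]"
  have h0_nth: "\<And>p. p < length \<alpha> \<Longrightarrow>
      h0 ! p = (if \<sigma> p = x then Id B (if \<alpha> ! p = Neg then Cod B f else Dom B f) else g0 ! p)"
    and h1_nth: "\<And>p. p < length \<beta> \<Longrightarrow>
      h1 ! p = (if \<tau> p = x then Id B (if \<beta> ! p = Neg then Dom B f else Cod B f) else g1 ! p)"
    by (simp_all add: h0_def h1_def)
  have h: "length h0 = length \<alpha>" "set h0 \<subseteq> Ar B" "length h1 = length \<beta>" "set h1 \<subseteq> Ar B"
    unfolding h0_def h1_def using ids g_ar by auto
  have "g0 = cmps B \<alpha> s0 h0" "g0' = cmps B \<alpha> s0' h0"
    by (rule cmps_unit_factorization[OF catB, where P = "\<lambda>p. \<sigma> p \<noteq> x", symmetric];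
        use g0 h g_ar g'_ar tgts_g0_nth g0_at g0_off h0_nth ids idX \<sigma> in \<open>auto simp: s0_def s0'_def\<close>)+
  moreover have "g1 = cmps B \<beta> h1 s1" "g1' = cmps B \<beta> h1 s1'"
    by (rule cmps_unit_factorization[OF catB, where P = "\<lambda>p. \<tau> p = x", symmetric];
        use g1 h g_ar g'_ar srcs_g1_nth g1_at g1_off h1_nth ids idX \<tau> in \<open>auto simp: s1_def s1'_def\<close>)+
  moreover have "tgts B \<alpha> h0 = srcs B \<alpha> s0" "tgts B \<alpha> h0 = srcs B \<alpha> s0'"
    by (rule nth_equalityI; use h tgts_g0_nth h0_nth ids idX \<sigma> in \<open>auto simp: s0_def s0'_def\<close>)+
  moreover have "srcs B \<beta> h1 = tgts B \<beta> s1" "srcs B \<beta> h1 = tgts B \<beta> s1'"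
    by (rule nth_equalityI; use h srcs_g1_nth h1_nth ids idX \<tau> in \<open>auto simp: s1_def s1'_def\<close>)+
  moreover have "srcs B \<alpha> h0 = srcs B \<alpha> g0"
    by (rule nth_equalityI) (use g0 h g0_at h0_nth ids f in auto)
  ultimately show ?thesis
    using dinatural_in_whiskered[OF catB catC F G T D f X x, of h0 h1 r] h r
    unfolding s0_def s0'_def s1_def s1'_def by simp
qed

lemma acyclic_pullback:
  assumes "acyclic E" and edges: "\<And>u v. (u, v) \<in> r \<Longrightarrow> (g u, g v) \<in> E\<^sup>+"
  shows "acyclic r"
proof (rule acyclicI, intro allI notI)
  have paths: "(g u, g v) \<in> E\<^sup>+" if "(u, v) \<in> r\<^sup>+" for u v
    using that
  proof (induction rule: trancl_induct)
    case (step v w)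
    show ?case by (rule trancl_trans[OF step.IH edges[OF step.hyps(2)]])
  qed (rule edges)
  fix u assume "(u, u) \<in> r\<^sup>+"
  with paths assms(1) show False by (auto simp: acyclic_def)
qed

section \<open>Iterated pushouts\<close>

lemma zchain_below: "K \<le> j \<Longrightarrow> zchain zeta j K x = x"
  by (induction K) auto

lemma zchain_Suc_start: "j < K \<Longrightarrow> zchain zeta j K x = zchain zeta (Suc j) K (zeta (Suc j) x)"
proof (induction K)
  case (Suc K)
  then show ?case by (cases "j = K") (simp_all add: zchain_below)
qed simp

locale composite_setting =
  fixes B :: "('o, 'm) category" and C :: "('c, 'd) category"
    and k :: nat and \<alpha> :: "nat \<Rightarrow> variance list"
    and Fo :: "nat \<Rightarrow> 'o list \<Rightarrow> 'c" and Fm :: "nat \<Rightarrow> 'm list \<Rightarrow> 'd"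
    and n :: "nat \<Rightarrow> nat" and \<sigma> \<tau> :: "nat \<Rightarrow> nat \<Rightarrow> nat"
    and \<phi> :: "nat \<Rightarrow> 'o list \<Rightarrow> 'd"
    and m :: "nat \<Rightarrow> nat" and zeta xip :: "nat \<Rightarrow> nat \<Rightarrow> nat"
    and i :: nat
  assumes catB: "is_category B" and catC: "is_category C"
    and k_pos: "1 \<le> k"
    and functors: "\<And>j. j \<le> k \<Longrightarrow> is_functor B C (\<alpha> j) (Fo j) (Fm j)"
    and transfs: "\<And>j. j < k \<Longrightarrow>
       is_transformation B C (\<alpha> j) (\<alpha> (Suc j)) (Fo j) (Fo (Suc j)) (n j) (\<sigma> j) (\<tau> j) (\<phi> j)"
    and pushouts: "iterated_pushouts k \<alpha> n \<sigma> \<tau> m zeta xip"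
    and i_in: "i < m (k - 1)"
    and acyc: "acyclic_on (cgraph_arcs k \<alpha> n \<sigma> \<tau>)
                 (component (cgraph_arcs k \<alpha> n \<sigma> \<tau>) k n (induced_xi k zeta xip) i)"
    and dinat: "\<And>j x. j < k \<Longrightarrow> x < n j \<Longrightarrow> induced_xi k zeta xip j x = i \<Longrightarrow>
       dinatural_in B C (\<alpha> j) (\<alpha> (Suc j)) (Fm j) (Fm (Suc j)) (n j) (\<sigma> j) (\<tau> j) (\<phi> j) x"
begin

abbreviation xi :: "nat \<Rightarrow> nat \<Rightarrow> nat" where "xi \<equiv> induced_xi k zeta xip"

lemma sigma_into: "j < k \<Longrightarrow> p < length (\<alpha> j) \<Longrightarrow> \<sigma> j p < n j"
  using transformation_maps_into(1)[OF transfs] .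

lemma tau_into: "j < k \<Longrightarrow> p < length (\<alpha> (Suc j)) \<Longrightarrow> \<tau> j p < n j"
  using transformation_maps_into(2)[OF transfs] .

lemma pushout_square: "1 \<le> j \<Longrightarrow> j < k \<Longrightarrow>
  is_pushout (length (\<alpha> j)) (m (j - 1)) (n j) (rleg \<tau> xip (j - 1)) (\<sigma> j) (m j) (zeta j) (xip j)"
  using pushouts by (simp add: iterated_pushouts_def)

lemma zchain_into: "j \<le> K \<Longrightarrow> K < k \<Longrightarrow> x < m j \<Longrightarrow> zchain zeta j K x < m K"
proof (induction K)
  case (Suc K)
  show ?case
  proof (cases "Suc K \<le> j")
    case False
    then have "zchain zeta j K x < m K" using Suc by simp
    moreover have "maps_into (zeta (Suc K)) (m K) (m (Suc K))"
      using pushout_square[of "Suc K"] Suc by (simp add: is_pushout_def)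
    ultimately show ?thesis using False by (simp add: maps_into_def)
  qed (use Suc zchain_below in simp)
qed simp

lemma xi_into: "j < k \<Longrightarrow> t < n j \<Longrightarrow> xi j t < m (k - 1)"
proof -
  assume j: "j < k" and t: "t < n j"
  have "(if j = 0 then id else xip j) t < m j"
  proof (cases "j = 0")
    case True then show ?thesis using t pushouts by (simp add: iterated_pushouts_def)
  next
    case False then show ?thesis using pushout_square[of j] j t by (simp add: is_pushout_def maps_into_def)
  qed
  then show ?thesis unfolding induced_xi_def using zchain_into[of j "k - 1"] j by simp
qed

lemma xi_sigma_eq_xi_tau:
  assumes j: "Suc j < k" and p: "p < length (\<alpha> (Suc j))"
  shows "xi (Suc j) (\<sigma> (Suc j) p) = xi j (\<tau> j p)"
proof -
  have square: "zeta (Suc j) (rleg \<tau> xip j p) = xip (Suc j) (\<sigma> (Suc j) p)"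
    using pushout_square[of "Suc j"] j p by (simp add: is_pushout_def)
  have "xi (Suc j) (\<sigma> (Suc j) p) = zchain zeta (Suc j) (k - 1) (zeta (Suc j) (rleg \<tau> xip j p))"
    unfolding induced_xi_def using square by simp
  also have "\<dots> = zchain zeta j (k - 1) (rleg \<tau> xip j p)"
    using zchain_Suc_start[of j "k - 1" zeta] j by simp
  also have "\<dots> = xi j (\<tau> j p)" unfolding induced_xi_def rleg_def by simp
  finally show ?thesis .
qed

end

section \<open>Switching the transitions of the i-th component one at a time\<close>

text \<open>For a fixed tuple As and morphism f, the transitions of the i-th component lying in S
  (the switched ones) are evaluated at Cod f and the other ones at Dom f. A place of variable i then carries
  f when exactly one of its two neighbouring transitions is switched and an identity otherwise;
  the missing neighbour of a place of the first or last block counts as switched exactly when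
  this reproduces the two sides of the dinaturality equation.\<close>

locale switching = composite_setting B C k \<alpha> Fo Fm n \<sigma> \<tau> \<phi> m zeta xip i
  for B :: "('o, 'm) category" and C :: "('c, 'd) category"
    and k \<alpha> Fo Fm n \<sigma> \<tau> \<phi> m zeta xip i +
  fixes As :: "'o list" and f :: 'm
  assumes As: "length As = m (k - 1)" "set As \<subseteq> Ob B" and f: "f \<in> Ar B"
begin

definition i_trans :: "(nat \<times> nat) set" where
  "i_trans = {(j, t). j < k \<and> t < n j \<and> xi j t = i}"

definition endpoint :: "bool \<Rightarrow> 'o" where
  "endpoint b = (if b then Cod B f else Dom B f)"

definition var_obj :: "(nat \<times> nat) set \<Rightarrow> nat \<Rightarrow> nat \<Rightarrow> 'o" where
  "var_obj S j t = (if xi j t = i then endpoint ((j, t) \<in> S) else As ! xi j t)"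

definition objs :: "(nat \<times> nat) set \<Rightarrow> nat \<Rightarrow> 'o list" where
  "objs S j = map (var_obj S j) [0..<n j]"

definition left_sw :: "(nat \<times> nat) set \<Rightarrow> nat \<Rightarrow> nat \<Rightarrow> bool" where
  "left_sw S j p = (if j = 0 then \<alpha> 0 ! p = Neg else (j - 1, \<tau> (j - 1) p) \<in> S)"

definition right_sw :: "(nat \<times> nat) set \<Rightarrow> nat \<Rightarrow> nat \<Rightarrow> bool" where
  "right_sw S j p = (if j = k then \<alpha> k ! p = Pos else (j, \<sigma> j p) \<in> S)"

definition place_var :: "nat \<Rightarrow> nat \<Rightarrow> nat" where
  "place_var j p = (if j = k then xi (k - 1) (\<tau> (k - 1) p) else xi j (\<sigma> j p))"

definition arr :: "(nat \<times> nat) set \<Rightarrow> nat \<Rightarrow> nat \<Rightarrow> 'm" where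
  "arr S j p =
     (if place_var j p = i
      then (if left_sw S j p = right_sw S j p then Id B (endpoint (left_sw S j p)) else f)
      else Id B (As ! place_var j p))"

definition arrs :: "(nat \<times> nat) set \<Rightarrow> nat \<Rightarrow> 'm list" where
  "arrs S j = map (arr S j) [0..<length (\<alpha> j)]"

primrec partial_comp :: "(nat \<times> nat) set \<Rightarrow> nat \<Rightarrow> 'd" where
  "partial_comp S 0 = Fm 0 (arrs S 0)"
| "partial_comp S (Suc j) =
     Cmp C (Fm (Suc j) (arrs S (Suc j))) (Cmp C (\<phi> j (objs S j)) (partial_comp S j))"

text \<open>The arcs of the i-th component of the composite graph, contracted through the places
  between consecutive blocks of transitions.\<close>
definition flow :: "((nat \<times> nat) \<times> (nat \<times> nat)) set" where
  "flow =
     {((j, t), (Suc j, t')) | j p t t'. Suc j < k \<and> p < length (\<alpha> (Suc j)) \<and> \<alpha> (Suc j) ! p = Pos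
        \<and> \<tau> j p = t \<and> \<sigma> (Suc j) p = t' \<and> (j, t) \<in> i_trans \<and> (Suc j, t') \<in> i_trans}
   \<union> {((Suc j, t'), (j, t)) | j p t t'. Suc j < k \<and> p < length (\<alpha> (Suc j)) \<and> \<alpha> (Suc j) ! p = Neg
        \<and> \<tau> j p = t \<and> \<sigma> (Suc j) p = t' \<and> (j, t) \<in> i_trans \<and> (Suc j, t') \<in> i_trans}"

definition flow_closed :: "(nat \<times> nat) set \<Rightarrow> bool" where
  "flow_closed S \<longleftrightarrow> S \<subseteq> i_trans \<and> (\<forall>u v. (u, v) \<in> flow \<longrightarrow> u \<in> S \<longrightarrow> v \<in> S)"

lemma f_ends: "Dom B f \<in> Ob B" "Cod B f \<in> Ob B"
  using cat_dom_cod[OF catB f] by auto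

lemma id_ends:
  "Id B (Dom B f) \<in> Ar B" "Dom B (Id B (Dom B f)) = Dom B f" "Cod B (Id B (Dom B f)) = Dom B f"
  "Id B (Cod B f) \<in> Ar B" "Dom B (Id B (Cod B f)) = Cod B f" "Cod B (Id B (Cod B f)) = Cod B f"
  using cat_id[OF catB f_ends(1)] cat_id[OF catB f_ends(2)] by auto

lemma endpoint_ob: "endpoint b \<in> Ob B"
  using f_ends by (simp add: endpoint_def)

lemma id_endpoint: "Dom B (Id B (endpoint b)) = endpoint b" "Cod B (Id B (endpoint b)) = endpoint b"
  using cat_id[OF catB endpoint_ob] by auto

lemma As_ob: "v < m (k - 1) \<Longrightarrow> As ! v \<in> Ob B"
  using As set_subset_nth by metis

lemma place_var_lt: "j < k \<Longrightarrow> place_var j p = xi j (\<sigma> j p)"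
  by (simp add: place_var_def)

lemma place_var_Suc: "j < k \<Longrightarrow> p < length (\<alpha> (Suc j)) \<Longrightarrow> place_var (Suc j) p = xi j (\<tau> j p)"
  using xi_sigma_eq_xi_tau[of j p] by (cases "Suc j = k") (auto simp: place_var_def)

lemma place_var_into: "j \<le> k \<Longrightarrow> p < length (\<alpha> j) \<Longrightarrow> place_var j p < m (k - 1)"
  using k_pos xi_into[of "k - 1" "\<tau> (k - 1) p"] tau_into[of "k - 1" p] xi_into[of j "\<sigma> j p"] sigma_into[of j p]
  by (cases "j = k") (auto simp: place_var_def)

lemma id_As_place_var:
  "j \<le> k \<Longrightarrow> p < length (\<alpha> j) \<Longrightarrow>
   Dom B (Id B (As ! place_var j p)) = As ! place_var j p \<and> Cod B (Id B (As ! place_var j p)) = As ! place_var j p"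
  using cat_id[OF catB As_ob[OF place_var_into]] by simp

lemma length_objs [simp]: "length (objs S j) = n j"
  by (simp add: objs_def)

lemma nth_objs: "t < n j \<Longrightarrow> objs S j ! t = var_obj S j t"
  by (simp add: objs_def)

lemma objs_ob: "j < k \<Longrightarrow> set (objs S j) \<subseteq> Ob B"
  using endpoint_ob As_ob xi_into by (auto simp: objs_def var_obj_def)

lemma length_arrs [simp]: "length (arrs S j) = length (\<alpha> j)"
  by (simp add: arrs_def)

lemma nth_arrs: "p < length (\<alpha> j) \<Longrightarrow> arrs S j ! p = arr S j p"
  by (simp add: arrs_def)

lemma arrs_ar: "j \<le> k \<Longrightarrow> set (arrs S j) \<subseteq> Ar B"
  using f cat_id[OF catB] endpoint_ob As_ob place_var_into by (auto simp: arrs_def arr_def)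

lemma phi_objs:
  "j < k \<Longrightarrow> \<phi> j (objs S j) \<in> Ar C
     \<and> Dom C (\<phi> j (objs S j)) = Fo j (reindex (\<sigma> j) (length (\<alpha> j)) (objs S j))
     \<and> Cod C (\<phi> j (objs S j)) = Fo (Suc j) (reindex (\<tau> j) (length (\<alpha> (Suc j))) (objs S j))"
  using transformation_component[OF transfs] objs_ob by simp

lemma Fm_arrs:
  "j \<le> k \<Longrightarrow> Fm j (arrs S j) \<in> Ar C
     \<and> Dom C (Fm j (arrs S j)) = Fo j (srcs B (\<alpha> j) (arrs S j))
     \<and> Cod C (Fm j (arrs S j)) = Fo j (tgts B (\<alpha> j) (arrs S j))"
  using functor_arr[OF functors] arrs_ar by simp

text \<open>Closedness under the flow is what makes the morphism at each place of variable i go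
  from the object of its source transition to that of its target transition.\<close>

lemma flow_closed_consistent:
  assumes S: "flow_closed S" and j: "j \<le> k" and p: "p < length (\<alpha> j)" and v: "place_var j p = i"
  shows "(\<alpha> j ! p = Pos \<longrightarrow> left_sw S j p \<longrightarrow> right_sw S j p)
       \<and> (\<alpha> j ! p = Neg \<longrightarrow> right_sw S j p \<longrightarrow> left_sw S j p)"
proof (cases "j = 0 \<or> j = k")
  case True then show ?thesis using k_pos by (auto simp: left_sw_def right_sw_def)
next
  case False
  then obtain j' where j': "j = Suc j'" "Suc j' < k" using j by (cases j) auto
  have p': "p < length (\<alpha> (Suc j'))" using p j' by simp
  have "(j', \<tau> j' p) \<in> i_trans"
    using tau_into[of j' p] p' j' v place_var_Suc[of j' p] by (simp add: i_trans_def)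
  moreover have "(Suc j', \<sigma> (Suc j') p) \<in> i_trans"
    using sigma_into[of "Suc j'" p] p' j' v place_var_lt[of "Suc j'" p] by (simp add: i_trans_def)
  ultimately have "\<alpha> j ! p = Pos \<longrightarrow> ((j', \<tau> j' p), (Suc j', \<sigma> (Suc j') p)) \<in> flow"
    "\<alpha> j ! p = Neg \<longrightarrow> ((Suc j', \<sigma> (Suc j') p), (j', \<tau> j' p)) \<in> flow"
    using j' p' unfolding flow_def by blast+
  then show ?thesis using S j' unfolding flow_closed_def left_sw_def right_sw_def by auto
qed

lemma tgts_arrs:
  assumes S: "flow_closed S" and j: "j < k"
  shows "tgts B (\<alpha> j) (arrs S j) = reindex (\<sigma> j) (length (\<alpha> j)) (objs S j)"
proof (rule nth_equalityI)
  fix p assume "p < length (tgts B (\<alpha> j) (arrs S j))"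
  then have p: "p < length (\<alpha> j)" by simp
  have "right_sw S j p = ((j, \<sigma> j p) \<in> S)" using j by (simp add: right_sw_def)
  then show "tgts B (\<alpha> j) (arrs S j) ! p = reindex (\<sigma> j) (length (\<alpha> j)) (objs S j) ! p"
    using p j sigma_into[OF j p] place_var_lt[OF j] flow_closed_consistent[OF S _ p]
      id_endpoint id_As_place_var[of j p] id_ends
    by (cases "\<alpha> j ! p") (auto simp: nth_arrs nth_objs arr_def var_obj_def endpoint_def)
qed simp

lemma srcs_arrs_Suc:
  assumes S: "flow_closed S" and j: "j < k"
  shows "srcs B (\<alpha> (Suc j)) (arrs S (Suc j)) = reindex (\<tau> j) (length (\<alpha> (Suc j))) (objs S j)"
proof (rule nth_equalityI)
  fix p assume "p < length (srcs B (\<alpha> (Suc j)) (arrs S (Suc j)))"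
  then have p: "p < length (\<alpha> (Suc j))" by simp
  have "left_sw S (Suc j) p = ((j, \<tau> j p) \<in> S)" by (simp add: left_sw_def)
  then show "srcs B (\<alpha> (Suc j)) (arrs S (Suc j)) ! p = reindex (\<tau> j) (length (\<alpha> (Suc j))) (objs S j) ! p"
    using p j tau_into[OF j p] place_var_Suc[OF j p] flow_closed_consistent[OF S _ p]
      id_endpoint id_As_place_var[of "Suc j" p] id_ends
    by (cases "\<alpha> (Suc j) ! p") (auto simp: nth_arrs nth_objs arr_def var_obj_def endpoint_def)
qed simp

lemma srcs_arrs_0: "srcs B (\<alpha> 0) (arrs S 0) = srcs B (\<alpha> 0) (arrs {} 0)"
  by (rule nth_equalityI)
     (use k_pos id_endpoint id_ends in \<open>auto simp: nth_arrs arr_def endpoint_def left_sw_def right_sw_def\<close>)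

lemma partial_comp_typing:
  assumes S: "flow_closed S"
  shows "j \<le> k \<Longrightarrow> partial_comp S j \<in> Ar C
     \<and> Dom C (partial_comp S j) = Fo 0 (srcs B (\<alpha> 0) (arrs S 0))
     \<and> Cod C (partial_comp S j) = Fo j (tgts B (\<alpha> j) (arrs S j))"
proof (induction j)
  case (Suc j)
  then have j: "j < k" by simp
  note IH = Suc.IH[OF Suc_leD[OF Suc.prems]] and P = phi_objs[OF j] and F = Fm_arrs[OF Suc.prems]
  have "Cmp C (\<phi> j (objs S j)) (partial_comp S j) \<in> Ar C
      \<and> Dom C (Cmp C (\<phi> j (objs S j)) (partial_comp S j)) = Dom C (partial_comp S j)
      \<and> Cod C (Cmp C (\<phi> j (objs S j)) (partial_comp S j)) = Cod C (\<phi> j (objs S j))"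
    by (rule cat_comp[OF catC]) (use IH P tgts_arrs[OF S j] in simp_all)
  moreover have "Cod C (\<phi> j (objs S j)) = Dom C (Fm (Suc j) (arrs S (Suc j)))"
    using P F srcs_arrs_Suc[OF S j] by simp
  ultimately show ?case
    using cat_comp[OF catC, of "Cmp C (\<phi> j (objs S j)) (partial_comp S j)" "Fm (Suc j) (arrs S (Suc j))"] F IH
    by simp
qed (use Fm_arrs in simp)

lemma phi_partial_comp_typing:
  assumes S: "flow_closed S" and j: "j < k"
  shows "Cmp C (\<phi> j (objs S j)) (partial_comp S j) \<in> Ar C \<and>
         Cod C (Cmp C (\<phi> j (objs S j)) (partial_comp S j)) = Fo (Suc j) (srcs B (\<alpha> (Suc j)) (arrs S (Suc j)))"
proof -
  note N = partial_comp_typing[OF S, of j] and P = phi_objs[OF j]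
  have "Cod C (partial_comp S j) = Dom C (\<phi> j (objs S j))" using N P tgts_arrs[OF S j] j by simp
  then show ?thesis
    using cat_comp[OF catC, of "partial_comp S j" "\<phi> j (objs S j)"] N P srcs_arrs_Suc[OF S j] j by simp
qed

lemma left_sw_insert: "left_sw (insert (j0, x) S) j p = (left_sw S j p \<or> (j = Suc j0 \<and> \<tau> j0 p = x))"
  by (auto simp: left_sw_def)

lemma right_sw_insert:
  "right_sw (insert (j0, x) S) j p = (right_sw S j p \<or> (j \<noteq> k \<and> j = j0 \<and> \<sigma> j0 p = x))"
  by (auto simp: right_sw_def)

context
  fixes S :: "(nat \<times> nat) set" and j0 x :: nat
  assumes S: "flow_closed S" and S': "flow_closed (insert (j0, x) S)"
    and new: "(j0, x) \<in> i_trans" "(j0, x) \<notin> S"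
begin

lemma switched_transition: "j0 < k" "x < n j0" "xi j0 x = i"
  using new by (auto simp: i_trans_def)

lemma arrs_insert_other: "j \<noteq> j0 \<Longrightarrow> j \<noteq> Suc j0 \<Longrightarrow> arrs (insert (j0, x) S) j = arrs S j"
  by (auto simp: arrs_def arr_def left_sw_insert right_sw_insert)

lemma objs_insert_other: "j \<noteq> j0 \<Longrightarrow> objs (insert (j0, x) S) j = objs S j"
  by (auto simp: objs_def var_obj_def)

lemma objs_insert: "objs (insert (j0, x) S) j0 = (objs S j0)[x := Cod B f]" "objs S j0 ! x = Dom B f"
  by (rule nth_equalityI)
     (use switched_transition new in \<open>auto simp: nth_objs var_obj_def endpoint_def nth_list_update\<close>)

lemma arrs_insert_sigma:
  assumes p: "p < length (\<alpha> j0)" and x: "\<sigma> j0 p = x"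
  shows "arrs S j0 ! p = (if \<alpha> j0 ! p = Neg then f else Id B (Dom B f))
       \<and> arrs (insert (j0, x) S) j0 ! p = (if \<alpha> j0 ! p = Neg then Id B (Cod B f) else f)"
proof -
  have v: "place_var j0 p = i" using place_var_lt switched_transition x by simp
  have R: "\<not> right_sw S j0 p" "right_sw (insert (j0, x) S) j0 p"
    using switched_transition x new by (auto simp: right_sw_def)
  have "left_sw (insert (j0, x) S) j0 p = left_sw S j0 p" by (auto simp: left_sw_insert)
  then show ?thesis
    using p v R flow_closed_consistent[OF S _ p v] flow_closed_consistent[OF S' _ p v] switched_transition
    by (cases "\<alpha> j0 ! p") (auto simp: nth_arrs arr_def endpoint_def)
qed

lemma arrs_insert_tau:
  assumes p: "p < length (\<alpha> (Suc j0))" and x: "\<tau> j0 p = x"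
  shows "arrs S (Suc j0) ! p = (if \<alpha> (Suc j0) ! p = Neg then Id B (Dom B f) else f)
       \<and> arrs (insert (j0, x) S) (Suc j0) ! p = (if \<alpha> (Suc j0) ! p = Neg then f else Id B (Cod B f))"
proof -
  have v: "place_var (Suc j0) p = i" using place_var_Suc switched_transition p x by simp
  have L: "\<not> left_sw S (Suc j0) p" "left_sw (insert (j0, x) S) (Suc j0) p"
    using x new by (auto simp: left_sw_def)
  have "right_sw (insert (j0, x) S) (Suc j0) p = right_sw S (Suc j0) p" by (auto simp: right_sw_insert)
  then show ?thesis
    using p v L flow_closed_consistent[OF S _ p v] flow_closed_consistent[OF S' _ p v] switched_transition
    by (cases "\<alpha> (Suc j0) ! p") (auto simp: nth_arrs arr_def endpoint_def)
qed

lemma arrs_insert_sigma_off: "p < length (\<alpha> j0) \<Longrightarrow> \<sigma> j0 p \<noteq> x \<Longrightarrow>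
    arrs (insert (j0, x) S) j0 ! p = arrs S j0 ! p"
  and arrs_insert_tau_off: "p' < length (\<alpha> (Suc j0)) \<Longrightarrow> \<tau> j0 p' \<noteq> x \<Longrightarrow>
    arrs (insert (j0, x) S) (Suc j0) ! p' = arrs S (Suc j0) ! p'"
  by (auto simp: nth_arrs arr_def left_sw_insert right_sw_insert)

lemma partial_comp_insert_below: "j < j0 \<Longrightarrow> partial_comp (insert (j0, x) S) j = partial_comp S j"
  by (induction j) (auto simp: arrs_insert_other objs_insert_other)

lemma partial_comp_insert_prefix:
  obtains r where "r \<in> Ar C" "Cod C r = Fo j0 (srcs B (\<alpha> j0) (arrs S j0))"
    "partial_comp S j0 = Cmp C (Fm j0 (arrs S j0)) r"
    "partial_comp (insert (j0, x) S) j0 = Cmp C (Fm j0 (arrs (insert (j0, x) S) j0)) r"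
proof (cases j0)
  case 0
  define r where "r = Id C (Fo 0 (srcs B (\<alpha> 0) (arrs S 0)))"
  have F0: "Fm 0 (arrs T 0) \<in> Ar C" "Dom C (Fm 0 (arrs T 0)) = Fo 0 (srcs B (\<alpha> 0) (arrs S 0))" for T
    using Fm_arrs[of 0 T] srcs_arrs_0[of T] srcs_arrs_0[of S] by auto
  have "Fo 0 (srcs B (\<alpha> 0) (arrs S 0)) \<in> Ob C" using cat_dom_cod[OF catC F0(1)[of S]] F0(2)[of S] by simp
  then have "r \<in> Ar C" "Cod C r = Fo 0 (srcs B (\<alpha> 0) (arrs S 0))"
    using cat_id[OF catC] by (auto simp: r_def)
  then show ?thesis using that[of r] 0 F0 cat_id_right[OF catC] by (simp add: r_def)
next
  case (Suc j)
  then show ?thesis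
    using that[of "Cmp C (\<phi> j (objs S j)) (partial_comp S j)"] phi_partial_comp_typing[OF S, of j]
      switched_transition partial_comp_insert_below[of j] objs_insert_other[of j]
    by simp
qed

lemma partial_comp_insert_Suc: "partial_comp (insert (j0, x) S) (Suc j0) = partial_comp S (Suc j0)"
proof -
  obtain r where r: "r \<in> Ar C" "Cod C r = Fo j0 (srcs B (\<alpha> j0) (arrs S j0))"
    and prefix: "partial_comp S j0 = Cmp C (Fm j0 (arrs S j0)) r"
      "partial_comp (insert (j0, x) S) j0 = Cmp C (Fm j0 (arrs (insert (j0, x) S) j0)) r"
    by (rule partial_comp_insert_prefix)
  note j0 = switched_transition
  have "Cmp C (Fm (Suc j0) (arrs S (Suc j0))) (Cmp C (\<phi> j0 (objs S j0)) (Cmp C (Fm j0 (arrs S j0)) r))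
      = Cmp C (Fm (Suc j0) (arrs (insert (j0, x) S) (Suc j0)))
          (Cmp C (\<phi> j0 ((objs S j0)[x := Cod B f])) (Cmp C (Fm j0 (arrs (insert (j0, x) S) j0)) r))"
    by (rule dinatural_in_switch[OF catB catC functors[of j0] functors[of "Suc j0"] transfs[of j0]
          dinat[of j0 x] f])
       (use j0 objs_ob[OF j0(1)] objs_insert(2) arrs_ar arrs_insert_sigma arrs_insert_tau
          arrs_insert_sigma_off arrs_insert_tau_off tgts_arrs[OF S j0(1)] srcs_arrs_Suc[OF S j0(1)] r
        in auto)
  then show ?thesis using prefix objs_insert(1) by simp
qed

lemma partial_comp_insert: "partial_comp (insert (j0, x) S) k = partial_comp S k"
proof -
  have "partial_comp (insert (j0, x) S) j = partial_comp S j" if "Suc j0 \<le> j" for j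
    using that
  proof (induction j)
    case (Suc j)
    show ?case
    proof (cases "j = j0")
      case True
      then show ?thesis by (simp only: partial_comp_insert_Suc)
    next
      case False
      then show ?thesis using Suc by (simp add: arrs_insert_other objs_insert_other)
    qed
  qed simp
  then show ?thesis using switched_transition by simp
qed

end

lemma finite_i_trans: "finite i_trans"
proof (rule finite_subset)
  show "i_trans \<subseteq> Sigma {..<k} (\<lambda>j. {..<n j})" by (auto simp: i_trans_def)
qed auto

lemma flow_subset: "flow \<subseteq> i_trans \<times> i_trans"
  by (auto simp: flow_def)

text \<open>An arc of the flow is a path of length two through a place in the composite graph.\<close>
lemma acyclic_flow: "acyclic flow"
proof -
  define E where "E = cgraph_arcs k \<alpha> n \<sigma> \<tau>"
  define V where "V = component E k n xi i"
  have acyc_E: "acyclic (E \<inter> V \<times> V)" using acyc by (simp add: E_def V_def acyclic_on_def)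
  have trans_V: "Trans j t \<in> V" if "(j, t) \<in> i_trans" for j t
    using that by (auto simp: V_def component_def i_trans_def)
  have out_V: "q \<in> V" if "(j, t) \<in> i_trans" "(Trans j t, q) \<in> E" for j t q
  proof -
    have "(Trans j t, q) \<in> (E \<union> E\<inverse>)\<^sup>*" using that(2) by blast
    then show ?thesis using that(1) by (auto simp: V_def component_def i_trans_def)
  qed
  show ?thesis
  proof (rule acyclic_pullback[OF acyc_E, where g = "\<lambda>(j, t). Trans j t"])
    fix u v assume "(u, v) \<in> flow"
    then consider (pos) j p t t' where "u = (j, t)" "v = (Suc j, t')" "Suc j < k"
        "p < length (\<alpha> (Suc j))" "\<alpha> (Suc j) ! p = Pos" "\<tau> j p = t" "\<sigma> (Suc j) p = t'"
        "(j, t) \<in> i_trans" "(Suc j, t') \<in> i_trans"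
      | (neg) j p t t' where "u = (Suc j, t')" "v = (j, t)" "Suc j < k"
        "p < length (\<alpha> (Suc j))" "\<alpha> (Suc j) ! p = Neg" "\<tau> j p = t" "\<sigma> (Suc j) p = t'"
        "(j, t) \<in> i_trans" "(Suc j, t') \<in> i_trans"
      unfolding flow_def by blast
    then show "((\<lambda>(j, t). Trans j t) u, (\<lambda>(j, t). Trans j t) v) \<in> (E \<inter> V \<times> V)\<^sup>+"
    proof cases
      case pos
      then have "(Trans j t, Place (Suc j) p) \<in> E" "(Place (Suc j) p, Trans (Suc j) t') \<in> E"
        unfolding E_def cgraph_arcs_def i_trans_def by simp_all
      then have "(Trans j t, Place (Suc j) p) \<in> E \<inter> V \<times> V" "(Place (Suc j) p, Trans (Suc j) t') \<in> E \<inter> V \<times> V"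
        using trans_V out_V pos by auto
      then have "(Trans j t, Trans (Suc j) t') \<in> (E \<inter> V \<times> V)\<^sup>+" by (rule trancl_into_trancl2[OF _ r_into_trancl])
      then show ?thesis using pos by simp
    next
      case neg
      then have "(Trans (Suc j) t', Place (Suc j) p) \<in> E" "(Place (Suc j) p, Trans j t) \<in> E"
        unfolding E_def cgraph_arcs_def i_trans_def by simp_all
      then have "(Trans (Suc j) t', Place (Suc j) p) \<in> E \<inter> V \<times> V" "(Place (Suc j) p, Trans j t) \<in> E \<inter> V \<times> V"
        using trans_V out_V neg by auto
      then have "(Trans (Suc j) t', Trans j t) \<in> (E \<inter> V \<times> V)\<^sup>+" by (rule trancl_into_trancl2[OF _ r_into_trancl])
      then show ?thesis using neg by simp
    qed
  qed
qed

lemma wf_flow: "wf flow"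
proof (rule finite_acyclic_wf[OF _ acyclic_flow])
  show "finite flow" by (rule finite_subset[OF flow_subset]) (simp add: finite_i_trans)
qed

lemma flow_closed_remove_minimal:
  assumes S: "flow_closed S" and t: "\<And>u. (u, t) \<in> flow \<Longrightarrow> u \<notin> S"
  shows "flow_closed (S - {t})"
  unfolding flow_closed_def
proof (intro conjI allI impI)
  show "S - {t} \<subseteq> i_trans" using S by (auto simp: flow_closed_def)
  fix u v assume uv: "(u, v) \<in> flow" and u: "u \<in> S - {t}"
  then have "v \<in> S" using S unfolding flow_closed_def by blast
  moreover have "v \<noteq> t" using t uv u by blast
  ultimately show "v \<in> S - {t}" by simp
qed

lemma partial_comp_flow_closed: "flow_closed S \<Longrightarrow> partial_comp S k = partial_comp {} k"
proof (induction "card S" arbitrary: S rule: less_induct)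
  case less
  show ?case
  proof (cases "S = {}")
    case False
    then obtain t where t: "t \<in> S" "\<And>u. (u, t) \<in> flow \<Longrightarrow> u \<notin> S"
      using wfE_min'[OF wf_flow] by blast
    obtain j0 x where jx: "t = (j0, x)" by (cases t)
    define S0 where "S0 = S - {t}"
    have S0: "flow_closed S0" unfolding S0_def by (rule flow_closed_remove_minimal[OF less.prems t(2)])
    have S_eq: "S = insert (j0, x) S0" using t(1) jx by (auto simp: S0_def)
    have "(j0, x) \<in> i_trans" using less.prems t(1) jx by (auto simp: flow_closed_def)
    moreover have "(j0, x) \<notin> S0" by (simp add: S0_def jx)
    ultimately have "partial_comp S k = partial_comp S0 k"
      using partial_comp_insert[OF S0, of j0 x] less.prems S_eq by simp
    moreover have "finite S" using less.prems finite_i_trans finite_subset by (auto simp: flow_closed_def)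
    then have "card S0 < card S" unfolding S0_def using t(1) by (rule card_Diff1_less)
    ultimately show ?thesis using less.hyps[OF _ S0] by simp
  qed simp
qed

lemma flow_closed_empty: "flow_closed {}"
  by (simp add: flow_closed_def)

lemma flow_closed_i_trans: "flow_closed i_trans"
  using flow_subset by (auto simp: flow_closed_def)

abbreviation composite :: "nat \<Rightarrow> 'o list \<Rightarrow> 'd" where
  "composite \<equiv> comp_components C \<phi> n xi"

context
  fixes S :: "(nat \<times> nat) set" and b :: bool
  assumes S: "flow_closed S"
    and uniform: "\<And>j t. j < k \<Longrightarrow> t < n j \<Longrightarrow> xi j t = i \<Longrightarrow> (j, t) \<in> S \<longleftrightarrow> b"
begin

lemma objs_uniform: "j < k \<Longrightarrow> objs S j = reindex (xi j) (n j) (As[i := endpoint b])"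
  by (rule nth_equalityI) (use uniform xi_into As i_in in \<open>auto simp: nth_objs var_obj_def\<close>)

lemma objs_uniform_glue:
  "Suc j < k \<Longrightarrow> reindex (\<sigma> (Suc j)) (length (\<alpha> (Suc j))) (objs S (Suc j))
                 = reindex (\<tau> j) (length (\<alpha> (Suc j))) (objs S j)"
  by (rule nth_equalityI)
     (use objs_uniform sigma_into tau_into xi_sigma_eq_xi_tau in \<open>simp_all add: objs_uniform\<close>)

lemma arrs_inner_uniform:
  assumes j: "Suc j < k"
  shows "arrs S (Suc j) = map (Id B) (reindex (\<tau> j) (length (\<alpha> (Suc j))) (objs S j))"
proof (rule nth_equalityI)
  fix p assume "p < length (arrs S (Suc j))"
  then have p: "p < length (\<alpha> (Suc j))" by simp
  have v: "place_var (Suc j) p = xi j (\<tau> j p)" "place_var (Suc j) p = xi (Suc j) (\<sigma> (Suc j) p)"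
    using place_var_Suc[of j p] place_var_lt[of "Suc j" p] j p by simp_all
  have "left_sw S (Suc j) p = b" if "place_var (Suc j) p = i"
    using uniform[of j "\<tau> j p"] j tau_into[of j p] p v that by (simp add: left_sw_def)
  moreover have "right_sw S (Suc j) p = b" if "place_var (Suc j) p = i"
    using uniform[of "Suc j" "\<sigma> (Suc j) p"] j sigma_into[of "Suc j" p] p v that by (simp add: right_sw_def)
  ultimately show "arrs S (Suc j) ! p = map (Id B) (reindex (\<tau> j) (length (\<alpha> (Suc j))) (objs S j)) ! p"
    using p v tau_into[of j p] j by (simp add: nth_arrs arr_def nth_objs var_obj_def left_sw_def)
qed simp

lemma partial_comp_inner_uniform:
  assumes j: "Suc j < k"
  shows "partial_comp S (Suc j) = Cmp C (\<phi> j (objs S j)) (partial_comp S j)"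
proof -
  define X where "X = reindex (\<tau> j) (length (\<alpha> (Suc j))) (objs S j)"
  have X: "length X = length (\<alpha> (Suc j))" "set X \<subseteq> Ob B"
    using set_subset_nth[OF objs_ob] tau_into j by (auto simp: X_def reindex_def)
  have "srcs B (\<alpha> (Suc j)) (arrs S (Suc j)) = X" using srcs_arrs_Suc[OF S] j by (simp add: X_def)
  then have "Cod C (Cmp C (\<phi> j (objs S j)) (partial_comp S j)) = Fo (Suc j) X"
    using phi_partial_comp_typing[OF S] j by simp
  moreover have "Fm (Suc j) (arrs S (Suc j)) = Id C (Fo (Suc j) X)"
    using arrs_inner_uniform[OF j] functor_id[OF functors X] j by (simp add: X_def)
  ultimately show ?thesis
    using cat_id_left[OF catC] phi_partial_comp_typing[OF S] j by simp
qed

lemma composite_uniform_typing: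
  "j < k \<Longrightarrow> composite j (As[i := endpoint b]) \<in> Ar C
     \<and> Dom C (composite j (As[i := endpoint b])) = Dom C (\<phi> 0 (objs S 0))
     \<and> Cod C (composite j (As[i := endpoint b])) = Cod C (\<phi> j (objs S j))"
proof (induction j)
  case 0
  then show ?case using phi_objs[of 0 S] objs_uniform[of 0] by simp
next
  case (Suc j)
  then have "Cod C (composite j (As[i := endpoint b])) = Dom C (\<phi> (Suc j) (objs S (Suc j)))"
    using phi_objs objs_uniform_glue by simp
  then show ?case
    using cat_comp[OF catC] Suc phi_objs[of "Suc j" S] objs_uniform[of "Suc j"] by simp
qed

lemma composite_uniform:
  "j < k \<Longrightarrow> Cmp C (\<phi> j (objs S j)) (partial_comp S j)
             = Cmp C (composite j (As[i := endpoint b])) (Fm 0 (arrs S 0))"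
proof (induction j)
  case 0
  then show ?case using objs_uniform by simp
next
  case (Suc j)
  note c = composite_uniform_typing[of j] and F0 = Fm_arrs[of 0 S]
  have "Cmp C (\<phi> (Suc j) (objs S (Suc j))) (partial_comp S (Suc j))
      = Cmp C (\<phi> (Suc j) (objs S (Suc j))) (Cmp C (composite j (As[i := endpoint b])) (Fm 0 (arrs S 0)))"
    using partial_comp_inner_uniform[OF Suc.prems] Suc by (simp del: partial_comp.simps)
  also have "\<dots> = Cmp C (Cmp C (\<phi> (Suc j) (objs S (Suc j))) (composite j (As[i := endpoint b])))
                        (Fm 0 (arrs S 0))"
    by (rule cat_assoc[OF catC])
       (use c F0 phi_objs objs_uniform_glue tgts_arrs[OF S, of 0] k_pos Suc.prems in simp_all)
  finally show ?case using objs_uniform[of "Suc j"] Suc.prems by simp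
qed

lemma partial_comp_uniform:
  "partial_comp S k = Cmp C (Cmp C (Fm k (arrs S k)) (composite (k - 1) (As[i := endpoint b])))
                            (Fm 0 (arrs S 0))"
proof -
  obtain j where k: "Suc j = k" using k_pos by (cases k) auto
  then have km: "k - 1 = j" by simp
  note c = composite_uniform_typing[of j] and Fk = Fm_arrs[of k S] and F0 = Fm_arrs[of 0 S]
  have "partial_comp S (Suc j) = Cmp C (Fm (Suc j) (arrs S (Suc j))) (Cmp C (\<phi> j (objs S j)) (partial_comp S j))"
    by simp
  then have "partial_comp S k
      = Cmp C (Fm k (arrs S k)) (Cmp C (composite j (As[i := endpoint b])) (Fm 0 (arrs S 0)))"
    using composite_uniform[of j] k by (simp only: k)
  also have "\<dots> = Cmp C (Cmp C (Fm k (arrs S k)) (composite j (As[i := endpoint b]))) (Fm 0 (arrs S 0))"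
    by (rule cat_assoc[OF catC])
       (use c Fk F0 phi_objs[of j S] phi_objs[of 0 S] tgts_arrs[OF S, of 0] srcs_arrs_Suc[OF S, of j] k in simp_all)
  finally show ?thesis unfolding km .
qed

end

lemma arrs_boundary:
  "arrs {} 0 = subst_arr B (\<alpha> 0) (xi 0 \<circ> \<sigma> 0) As i f (Id B (Dom B f))"
  "arrs {} k = subst_arr B (\<alpha> k) (xi (k - 1) \<circ> \<tau> (k - 1)) As i (Id B (Dom B f)) f"
  "arrs i_trans 0 = subst_arr B (\<alpha> 0) (xi 0 \<circ> \<sigma> 0) As i (Id B (Cod B f)) f"
  "arrs i_trans k = subst_arr B (\<alpha> k) (xi (k - 1) \<circ> \<tau> (k - 1)) As i f (Id B (Cod B f))"
  using k_pos sigma_into[of 0] tau_into[of "k - 1"]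
  by (auto intro!: nth_equalityI simp: nth_arrs arr_def place_var_def left_sw_def right_sw_def
      endpoint_def i_trans_def)

lemma composite_dinatural_at:
  "Cmp C (Cmp C (Fm k (subst_arr B (\<alpha> k) (xi (k - 1) \<circ> \<tau> (k - 1)) As i (Id B (Dom B f)) f))
                 (composite (k - 1) (As[i := Dom B f])))
         (Fm 0 (subst_arr B (\<alpha> 0) (xi 0 \<circ> \<sigma> 0) As i f (Id B (Dom B f))))
 = Cmp C (Cmp C (Fm k (subst_arr B (\<alpha> k) (xi (k - 1) \<circ> \<tau> (k - 1)) As i f (Id B (Cod B f))))
                 (composite (k - 1) (As[i := Cod B f])))
         (Fm 0 (subst_arr B (\<alpha> 0) (xi 0 \<circ> \<sigma> 0) As i (Id B (Cod B f)) f))"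
proof -
  have "partial_comp {} k
      = Cmp C (Cmp C (Fm k (arrs {} k)) (composite (k - 1) (As[i := endpoint False]))) (Fm 0 (arrs {} 0))"
    by (rule partial_comp_uniform[OF flow_closed_empty]) simp
  moreover have "partial_comp i_trans k
      = Cmp C (Cmp C (Fm k (arrs i_trans k)) (composite (k - 1) (As[i := endpoint True])))
          (Fm 0 (arrs i_trans 0))"
    by (rule partial_comp_uniform[OF flow_closed_i_trans]) (simp add: i_trans_def)
  ultimately show ?thesis
    using partial_comp_flow_closed[OF flow_closed_i_trans] by (simp only: arrs_boundary endpoint_def if_True if_False)
qed

end

lemma (in composite_setting) composite_dinatural:
  "dinatural_in B C (\<alpha> 0) (\<alpha> k) (Fm 0) (Fm k) (m (k - 1)) (xi 0 \<circ> \<sigma> 0) (xi (k - 1) \<circ> \<tau> (k - 1))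
     (comp_components C \<phi> n xi (k - 1)) i"
  unfolding dinatural_in_def Let_def
  by (intro allI impI switching.composite_dinatural_at[where Fo = Fo] switching.intro
        switching_axioms.intro) (auto intro: composite_setting_axioms)

theorem mainTheorem5:
  fixes B :: "('o, 'm) category" and C :: "('c, 'd) category"
    and k :: nat and \<alpha> :: "nat \<Rightarrow> variance list"
    and Fo :: "nat \<Rightarrow> 'o list \<Rightarrow> 'c" and Fm :: "nat \<Rightarrow> 'm list \<Rightarrow> 'd"
    and n :: "nat \<Rightarrow> nat" and \<sigma> \<tau> :: "nat \<Rightarrow> nat \<Rightarrow> nat"
    and \<phi> :: "nat \<Rightarrow> 'o list \<Rightarrow> 'd"
    and m :: "nat \<Rightarrow> nat" and zeta xip :: "nat \<Rightarrow> nat \<Rightarrow> nat"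
    and i :: nat
  assumes catB: "is_category B" and catC: "is_category C"
    and k_pos: "1 \<le> k"
    and functors: "\<And>j. j \<le> k \<Longrightarrow> is_functor B C (\<alpha> j) (Fo j) (Fm j)"
    and transfs: "\<And>j. j < k \<Longrightarrow>
       is_transformation B C (\<alpha> j) (\<alpha> (Suc j)) (Fo j) (Fo (Suc j)) (n j) (\<sigma> j) (\<tau> j) (\<phi> j)"
    and pushouts: "iterated_pushouts k \<alpha> n \<sigma> \<tau> m zeta xip"
    and i_in: "i < m (k - 1)"
    and acyc: "acyclic_on (cgraph_arcs k \<alpha> n \<sigma> \<tau>)
                 (component (cgraph_arcs k \<alpha> n \<sigma> \<tau>) k n (induced_xi k zeta xip) i)"
    and dinat: "\<And>j x. j < k \<Longrightarrow> x < n j \<Longrightarrow> induced_xi k zeta xip j x = i \<Longrightarrow>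
       dinatural_in B C (\<alpha> j) (\<alpha> (Suc j)) (Fm j) (Fm (Suc j)) (n j) (\<sigma> j) (\<tau> j) (\<phi> j) x"
  shows "dinatural_in B C (\<alpha> 0) (\<alpha> k) (Fm 0) (Fm k) (m (k - 1))
           (induced_xi k zeta xip 0 \<circ> \<sigma> 0) (induced_xi k zeta xip (k - 1) \<circ> \<tau> (k - 1))
           (comp_components C \<phi> n (induced_xi k zeta xip) (k - 1)) i"
proof -
  interpret composite_setting B C k \<alpha> Fo Fm n \<sigma> \<tau> \<phi> m zeta xip i
    by unfold_locales (fact catB catC k_pos functors transfs pushouts i_in acyc dinat)+
  show ?thesis by (rule composite_dinatural)
qed

end
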